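(* (i) If $f(z)=z+a_2z^2+\dots+a_dz^d$ is univalent in the unit disk $\mathbb D$ and $a_d=1/d$, then $f'$ is self-dual in $\Pi_{d-1}$. (ii) If $f(z)=z+\frac{a_1}{z}+\dots+\frac{a_d}{z^d}$ is univalent in $\Delta=\widehat{\mathbb C}\setminus\overline{\mathbb D}$ and $a_d=-1/d$, then the polynomial $z\mapsto f'(1/z)$ is self-dual in $\Pi_{d+1}$.
   Context: $\Pi_k$ denotes the space of complex polynomials of degree $\le k$. For $p\in\Pi_k$ define $p^*(z)=z^k\,\overline{p(1/\bar z)}$; $p$ is self-dual in $\Pi_k$ if $p^*=p$. *)

theory Defs
  imports "HOL-Analysis.Analysis" "HOL-Computational_Algebra.Polynomial"
begin

text \<open>p is self-dual in Pi_k: p has degree at most k and p*(z) = z^k conj(p(1/conj z)) equals p.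
  The dual is given by the paper's formula, which is meaningful for z nonzero; as both
  sides are polynomials, equality on nonzero z is equality of polynomials.\<close>
definition self_dual :: "nat \<Rightarrow> complex poly \<Rightarrow> bool" where
  "self_dual k p \<longleftrightarrow> degree p \<le> k \<and>
     (\<forall>z. z \<noteq> 0 \<longrightarrow> z ^ k * cnj (poly p (1 / cnj z)) = poly p z)"

end

theory Submission
  imports Defs "HOL-Computational_Algebra.Fundamental_Theorem_Algebra"
    "HOL-Complex_Analysis.Conformal_Mappings"
begin

text \<open>By univalence the polynomial in question (f' resp. z \<mapsto> f'(1/z)) has no zero in the open
  unit disk, so all its roots have modulus at least 1. The normalisation of the top coefficient
  makes it monic with constant term 1, so the product of the moduli of its roots is 1 and
  every root lies on the unit circle. For a root r with |r| = 1 the reciprocal conjugate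
  1/cnj r equals r, so z (cnj (1/cnj z) - cnj r) = -cnj r (z - r); multiplying over all roots,
  the factors -cnj r combine to the conjugate of the constant term, which is 1.\<close>

lemma prod_ge_1_eq_1_imp_eq_1:
  fixes f :: "'a \<Rightarrow> 'b :: linordered_idom"
  assumes "finite S" and ge: "\<And>i. i \<in> S \<Longrightarrow> f i \<ge> 1" and "prod f S = 1" and "j \<in> S"
  shows "f j = 1"
proof (rule ccontr)
  assume "f j \<noteq> 1"
  with ge[OF \<open>j \<in> S\<close>] have "f j > 1" by simp
  have "prod f (S - {j}) \<ge> 1" by (rule prod_ge_1) (simp add: ge)
  then have "f j * 1 \<le> f j * prod f (S - {j})"
    using \<open>f j > 1\<close> by (intro mult_left_mono) auto
  with \<open>f j > 1\<close> have "f j * prod f (S - {j}) > 1"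
    by (metis mult.right_neutral order.strict_trans2)
  moreover have "prod f S = f j * prod f (S - {j})"
    using \<open>finite S\<close> \<open>j \<in> S\<close> by (rule prod.remove)
  ultimately show False using \<open>prod f S = 1\<close> by simp
qed

lemma self_dual_prod_unimodular_roots:
  fixes r :: "nat \<Rightarrow> complex"
  assumes unimodular: "\<And>i. i < k \<Longrightarrow> norm (r i) = 1" and const: "(\<Prod>i<k. - r i) = 1"
  shows "self_dual k (\<Prod>i<k. [:- r i, 1:])"
  unfolding self_dual_def
proof (intro conjI allI impI)
  show "degree (\<Prod>i<k. [:- r i, 1:]) \<le> k"
    by (rule order.trans[OF degree_prod_sum_le]) auto
  fix z :: complex assume "z \<noteq> 0"
  have factor: "z * cnj (1 / cnj z - r i) = - cnj (r i) * (z - r i)" if "i < k" for i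
  proof -
    have "r i * cnj (r i) = 1"
      using unimodular[OF that] by (metis complex_norm_square of_real_1 one_power2)
    have "z * cnj (1 / cnj z - r i) = 1 - z * cnj (r i)"
      using \<open>z \<noteq> 0\<close> by (simp add: right_diff_distrib)
    also have "\<dots> = - cnj (r i) * (z - r i)"
      using \<open>r i * cnj (r i) = 1\<close> by (simp add: algebra_simps)
    finally show ?thesis .
  qed
  have "z ^ k * cnj (poly (\<Prod>i<k. [:- r i, 1:]) (1 / cnj z)) = (\<Prod>i<k. z * cnj (1 / cnj z - r i))"
    by (simp add: poly_prod prod.distrib)
  also have "\<dots> = (\<Prod>i<k. - cnj (r i) * (z - r i))"
    by (rule prod.cong[OF refl]) (simp only: lessThan_iff factor)
  also have "\<dots> = (\<Prod>i<k. - cnj (r i)) * (\<Prod>i<k. z - r i)"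
    by (rule prod.distrib)
  also have "(\<Prod>i<k. - cnj (r i)) = cnj (\<Prod>i<k. - r i)"
    by simp
  finally show "z ^ k * cnj (poly (\<Prod>i<k. [:- r i, 1:]) (1 / cnj z)) = poly (\<Prod>i<k. [:- r i, 1:]) z"
    using const by (simp add: poly_prod)
qed

lemma self_dual_if_zero_free_in_disc:
  fixes q :: "complex poly"
  assumes "degree q \<le> k" and lead: "coeff q k = 1" and const: "coeff q 0 = 1"
    and zero_free: "\<And>z. norm z < 1 \<Longrightarrow> poly q z \<noteq> 0"
  shows "self_dual k q"
proof -
  have "degree q = k"
    using assms(1) lead by (metis coeff_eq_0 le_antisym not_le zero_neq_one)
  moreover obtain r where "smult (lead_coeff q) (\<Prod>i<degree q. [:- r i, 1:]) = q"
    using complex_poly_decompose' by blast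
  ultimately have q: "q = (\<Prod>i<k. [:- r i, 1:])"
    using lead by simp
  have roots: "poly q (r i) = 0" if "i < k" for i
    unfolding q poly_prod using that by (intro prod_zero) auto
  have "(\<Prod>i<k. - r i) = 1"
    using const by (simp add: q poly_prod flip: poly_0_coeff_0)
  then have "norm (\<Prod>i<k. - r i) = 1"
    by simp
  then have norm_prod: "(\<Prod>i<k. norm (r i)) = 1"
    by (simp add: prod_norm[symmetric] del: prod_norm)
  have norm_ge: "norm (r i) \<ge> 1" if "i < k" for i
    using zero_free roots[OF that] by (meson not_le)
  have "norm (r i) = 1" if "i < k" for i
    using that norm_ge by (intro prod_ge_1_eq_1_imp_eq_1[OF _ _ norm_prod]) auto
  then show ?thesis
    unfolding q using \<open>(\<Prod>i<k. - r i) = 1\<close> by (rule self_dual_prod_unimodular_roots)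
qed

lemma self_dual_pderiv_if_univalent:
  fixes p :: "complex poly"
  assumes "d \<ge> 1" "degree p \<le> d" "coeff p 1 = 1" "coeff p d = 1 / of_nat d"
    and univalent: "inj_on (poly p) (ball 0 1)"
  shows "self_dual (d - 1) (pderiv p)"
proof (rule self_dual_if_zero_free_in_disc)
  show "degree (pderiv p) \<le> d - 1"
    using assms(2) by (simp add: degree_pderiv)
  have "Suc (d - 1) = d"
    using assms(1) by simp
  then show "coeff (pderiv p) (d - 1) = 1"
    using assms(1,4) by (simp add: coeff_pderiv)
  show "coeff (pderiv p) 0 = 1"
    using assms(3) by (simp add: coeff_pderiv)
  fix z :: complex assume "norm z < 1"
  have "poly p holomorphic_on ball 0 1"
    unfolding holomorphic_on_def field_differentiable_def
    by (meson has_field_derivative_at_within poly_DERIV)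
  then have "deriv (poly p) z \<noteq> 0"
    by (rule holomorphic_injective_imp_regular[OF _ open_ball univalent])
      (simp add: \<open>norm z < 1\<close>)
  then show "poly (pderiv p) z \<noteq> 0"
    by (simp add: DERIV_imp_deriv[OF poly_DERIV])
qed

lemma has_field_derivative_inverse_power_sum:
  fixes a :: "nat \<Rightarrow> complex"
  assumes "w \<noteq> 0"
  shows "((\<lambda>z. z + (\<Sum>k=1..d. a k / z ^ k)) has_field_derivative
           1 + (\<Sum>k=1..d. - of_nat k * a k / w ^ (k + 1))) (at w)"
proof -
  have "((\<lambda>z. a k / z ^ k) has_field_derivative - of_nat k * a k / w ^ (k + 1)) (at w)" for k
  proof -
    have "w ^ Suc k * w ^ (k - 1) = w ^ k * w ^ k" if "k > 0"
    proof -
      have "Suc k + (k - 1) = k + k"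
        using that by simp
      then show ?thesis
        by (metis power_add)
    qed
    then show ?thesis
      using \<open>w \<noteq> 0\<close>
      by (auto intro!: derivative_eq_intros
          simp: field_simps power_Suc[symmetric] simp del: power_Suc)
  qed
  then show ?thesis
    by (intro DERIV_add DERIV_ident DERIV_sum)
qed

lemma self_dual_reflected_derivative_if_univalent:
  fixes a :: "nat \<Rightarrow> complex"
  assumes "d \<ge> 1" and f: "\<And>z. f z = z + (\<Sum>k=1..d. a k / z ^ k)"
    and "a d = - 1 / of_nat d" and univalent: "inj_on f {z. 1 < norm z}"
  defines "q \<equiv> 1 + (\<Sum>k=1..d. monom (- of_nat k * a k) (k + 1))"
  shows "(\<forall>z. z \<noteq> 0 \<longrightarrow> poly q z = deriv f (1 / z)) \<and> self_dual (d + 1) q"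
proof
  have f': "(f has_field_derivative 1 + (\<Sum>k=1..d. - of_nat k * a k / w ^ (k + 1))) (at w)"
    if "w \<noteq> 0" for w
    unfolding f[abs_def] using that by (rule has_field_derivative_inverse_power_sum)
  have poly_q: "poly q z = deriv f (1 / z)" if "z \<noteq> 0" for z
  proof -
    have "deriv f (1 / z) = 1 + (\<Sum>k=1..d. - of_nat k * a k / (1 / z) ^ (k + 1))"
      using that by (intro DERIV_imp_deriv f') simp
    then show ?thesis
      by (simp add: q_def poly_sum poly_monom power_one_over)
  qed
  then show "\<forall>z. z \<noteq> 0 \<longrightarrow> poly q z = deriv f (1 / z)"
    by blast
  show "self_dual (d + 1) q"
  proof (rule self_dual_if_zero_free_in_disc)
    show "degree q \<le> d + 1"
      unfolding q_def
      by (intro degree_add_le) (auto intro!: degree_sum_le order.trans[OF degree_monom_le])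
    show "coeff q (d + 1) = 1"
      using assms(1,3) by (simp add: q_def coeff_sum coeff_monom)
    show "coeff q 0 = 1"
      by (simp add: q_def coeff_sum coeff_monom)
    fix z :: complex assume "norm z < 1"
    show "poly q z \<noteq> 0"
    proof (cases "z = 0")
      case True
      then show ?thesis by (simp add: q_def poly_sum poly_monom)
    next
      case False
      have "f holomorphic_on {z. 1 < norm z}"
        using f' unfolding holomorphic_on_def field_differentiable_def
        by (metis has_field_derivative_at_within mem_Collect_eq norm_zero not_one_less_zero)
      moreover have "open {z :: complex. 1 < norm z}"
        by (intro open_Collect_less continuous_intros)
      moreover have "1 < norm (1 / z)"
        using False \<open>norm z < 1\<close> by (simp add: norm_divide field_simps)
      ultimately have "deriv f (1 / z) \<noteq> 0"
        by (intro holomorphic_injective_imp_regular[OF _ _ univalent]) auto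
      then show ?thesis
        using poly_q[OF False] by simp
    qed
  qed
qed

theorem lemma2p9:
  shows "(\<forall>(d::nat) (p::complex poly).
            d \<ge> 2 \<and> degree p \<le> d \<and> coeff p 0 = 0 \<and> coeff p 1 = 1 \<and>
            coeff p d = 1 / of_nat d \<and> inj_on (poly p) (ball 0 1)
            \<longrightarrow> self_dual (d - 1) (pderiv p))
       \<and> (\<forall>(d::nat) (a::nat \<Rightarrow> complex) (f::complex \<Rightarrow> complex).
            d \<ge> 1 \<and> (\<forall>z. f z = z + (\<Sum>k=1..d. a k / z ^ k)) \<and>
            a d = - 1 / of_nat d \<and> inj_on f {z. 1 < norm z}
            \<longrightarrow> (\<exists>q. (\<forall>z. z \<noteq> 0 \<longrightarrow> poly q z = deriv f (1 / z)) \<and> self_dual (d + 1) q))"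
proof (intro conjI allI impI)
  fix d and p :: "complex poly"
  assume "d \<ge> 2 \<and> degree p \<le> d \<and> coeff p 0 = 0 \<and> coeff p 1 = 1 \<and>
    coeff p d = 1 / of_nat d \<and> inj_on (poly p) (ball 0 1)"
  then show "self_dual (d - 1) (pderiv p)"
    by (intro self_dual_pderiv_if_univalent) auto
next
  fix d a and f :: "complex \<Rightarrow> complex"
  assume "d \<ge> 1 \<and> (\<forall>z. f z = z + (\<Sum>k=1..d. a k / z ^ k)) \<and>
    a d = - 1 / of_nat d \<and> inj_on f {z. 1 < norm z}"
  then show "\<exists>q. (\<forall>z. z \<noteq> 0 \<longrightarrow> poly q z = deriv f (1 / z)) \<and> self_dual (d + 1) q"
    using self_dual_reflected_derivative_if_univalent by blast
qed

end
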